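(* The ideals $I_2(\mathbf T_{\lambda-\mu})$ and $I_2(\mathbf S_{\lambda-\mu})$ are prime ideals of $K[\mathbf T_{\lambda-\mu}]$.
   Context: Let $K$ be a field. Fix an integer $n\ge1$, a partition $\lambda=(\lambda_1,\dots,\lambda_n)$ of positive integers with $m:=\lambda_1\ge\lambda_2\ge\cdots\ge\lambda_n$, and an integer vector $\mu=(\mu_1,\dots,\mu_n)$ with $0\le\mu_1\le\cdots\le\mu_n<\lambda_n$ and $\mu_i\ge i-1$ for all $i$. The tableau $\mathbf T_{\lambda-\mu}$ is the set of positions $\{(i,j):1\le i\le n,\ \mu_i<j\le\lambda_i\}$ in an $m\times m$ array, and $K[\mathbf T_{\lambda-\mu}]$ is the polynomial ring over $K$ in the variables $T_{ij}$, $(i,j)\in\mathbf T_{\lambda-\mu}$; the entry of $\mathbf T_{\lambda-\mu}$ at $(i,j)$ is $T_{ij}$. The symmetrized tableau $\mathbf S_{\lambda-\mu}$ is the partially filled $m\times m$ array with set of positions $\{(i,j):(i,j)\in\mathbf T_{\lambda-\mu}\text{ or }(j,i)\in\mathbf T_{\lambda-\mu}\}$, whose entry at $(i,j)$ is $T_{ij}$ if $(i,j)\in\mathbf T_{\lambda-\mu}$ and $T_{ji}$ otherwise. For such an array $A$ with set of positions $P$ and entries $a_{ij}$, a 2-minor of $A$ is a polynomial $a_{ij}a_{kl}-a_{il}a_{kj}$ with $i<k$, $j<l$ and $(i,j),(i,l),(k,j),(k,l)\in P$. $I_2(\mathbf T_{\lambda-\mu})$ and $I_2(\mathbf S_{\lambda-\mu})$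 denote the ideals of $K[\mathbf T_{\lambda-\mu}]$ generated by the 2-minors of $\mathbf T_{\lambda-\mu}$ and of $\mathbf S_{\lambda-\mu}$. *)

theory Defs
  imports "HOL-Library.Poly_Mapping"
begin

text \<open>Multivariate polynomials over a field 'k in variables indexed by positions (i,j) :: nat \<times> nat,
  represented as finitely supported maps from monomials (finitely supported exponent vectors)
  to coefficients; multiplication is convolution.\<close>

type_synonym 'k mpoly = "((nat \<times> nat) \<Rightarrow>\<^sub>0 nat) \<Rightarrow>\<^sub>0 'k"

definition Var :: "nat \<times> nat \<Rightarrow> 'k::comm_ring_1 mpoly" where
  "Var p = Poly_Mapping.single (Poly_Mapping.single p 1) 1"

definition poly_ring :: "(nat \<times> nat) set \<Rightarrow> 'k::comm_ring_1 mpoly set" where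
  "poly_ring V = {p :: 'k mpoly. \<forall>m \<in> Poly_Mapping.keys p. Poly_Mapping.keys m \<subseteq> V}"

definition ideal_gen :: "'a::comm_ring_1 set \<Rightarrow> 'a set \<Rightarrow> 'a set" where
  "ideal_gen R G = {x. \<exists>F c. finite F \<and> F \<subseteq> G \<and> (\<forall>g\<in>F. c g \<in> R) \<and> x = (\<Sum>g\<in>F. c g * g)}"

definition prime_ideal_in :: "'a::comm_ring_1 set \<Rightarrow> 'a set \<Rightarrow> bool" where
  "prime_ideal_in R I \<longleftrightarrow> I \<subseteq> R \<and> 0 \<in> I \<and>
     (\<forall>a\<in>I. \<forall>b\<in>I. a + b \<in> I) \<and> (\<forall>r\<in>R. \<forall>a\<in>I. r * a \<in> I) \<and>
     I \<noteq> R \<and> (\<forall>a\<in>R. \<forall>b\<in>R. a * b \<in> I \<longrightarrow> a \<in> I \<or> b \<in> I)"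

definition tab_pos :: "nat \<Rightarrow> (nat \<Rightarrow> nat) \<Rightarrow> (nat \<Rightarrow> nat) \<Rightarrow> (nat \<times> nat) set" where
  "tab_pos n lam mu = {(i, j). 1 \<le> i \<and> i \<le> n \<and> mu i < j \<and> j \<le> lam i}"

definition sym_pos :: "nat \<Rightarrow> (nat \<Rightarrow> nat) \<Rightarrow> (nat \<Rightarrow> nat) \<Rightarrow> (nat \<times> nat) set" where
  "sym_pos n lam mu = {(i, j). (i, j) \<in> tab_pos n lam mu \<or> (j, i) \<in> tab_pos n lam mu}"

definition tab_entry :: "nat \<times> nat \<Rightarrow> 'k::comm_ring_1 mpoly" where
  "tab_entry p = Var p"

definition sym_entry :: "nat \<Rightarrow> (nat \<Rightarrow> nat) \<Rightarrow> (nat \<Rightarrow> nat) \<Rightarrow> nat \<times> nat \<Rightarrow> 'k::comm_ring_1 mpoly" where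
  "sym_entry n lam mu p = (if p \<in> tab_pos n lam mu then Var p else Var (snd p, fst p))"

definition two_minors :: "(nat \<times> nat) set \<Rightarrow> (nat \<times> nat \<Rightarrow> 'a::comm_ring_1) \<Rightarrow> 'a set" where
  "two_minors P a = {a (i, j) * a (k, l) - a (i, l) * a (k, j) | i j k l.
      i < k \<and> j < l \<and> (i, j) \<in> P \<and> (i, l) \<in> P \<and> (k, j) \<in> P \<and> (k, l) \<in> P}"

end

theory Submission
  imports Defs "HOL-Library.Product_Lexorder"
begin

text \<open>Both ideals are toric. Substituting \<open>T\<^sub>i\<^sub>j \<mapsto> x\<^sub>i y\<^sub>j\<close>, respectively \<open>T\<^sub>i\<^sub>j \<mapsto> x\<^sub>i x\<^sub>j\<close>, is
  a ring homomorphism into a polynomial ring, which is a domain, so its kernel is prime; the work is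
  to show that the 2-minors generate this kernel. The kernel of a monomial substitution is spanned
  by the binomials \<open>u - u'\<close> of monomials with the same image, so it suffices to connect any two
  such monomials by moves along 2-minors.

  For \<open>T\<close> the image of a monomial records its row and column sums. Rows of \<open>T\<close> are nested (a row
  contains all columns of the later rows), so a 2-minor can move a variable of the last occupied
  row of one monomial into the other, and induction on the degree connects them.

  For \<open>S\<close> the image records only how often each index occurs. The minors of \<open>S\<close> replace
  \<open>T\<^sub>a\<^sub>b T\<^sub>c\<^sub>d\<close> with \<open>b < c\<close> by \<open>T\<^sub>a\<^sub>c T\<^sub>b\<^sub>d\<close>, lowering the sum of the row indices, until every row
  index is at most every column index. For such monomials the index counts determine the row and
  column sums, which reduces the problem to the case of \<open>T\<close>.\<close>

section \<open>Monomial maps\<close>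

definition monomial_map :: "('a \<Rightarrow> 'b) \<Rightarrow> ('a \<Rightarrow>\<^sub>0 'k::comm_monoid_add) \<Rightarrow> 'b \<Rightarrow>\<^sub>0 'k" where
  "monomial_map \<psi> p = (\<Sum>m\<in>Poly_Mapping.keys p. Poly_Mapping.single (\<psi> m) (Poly_Mapping.lookup p m))"

lemma monomial_map_eq_sum_superset:
  assumes "finite A" "Poly_Mapping.keys p \<subseteq> A"
  shows "monomial_map \<psi> p = (\<Sum>m\<in>A. Poly_Mapping.single (\<psi> m) (Poly_Mapping.lookup p m))"
  unfolding monomial_map_def
  by (rule sum.mono_neutral_left) (use assms in \<open>auto simp: in_keys_iff\<close>)

lemma monomial_map_add: "monomial_map \<psi> (p + q) = monomial_map \<psi> p + monomial_map \<psi> q"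
proof -
  let ?A = "Poly_Mapping.keys p \<union> Poly_Mapping.keys q"
  have "monomial_map \<psi> (p + q)
      = (\<Sum>m\<in>?A. Poly_Mapping.single (\<psi> m) (Poly_Mapping.lookup (p + q) m))"
    by (rule monomial_map_eq_sum_superset) (auto dest: set_mp[OF keys_add])
  also have "\<dots> = (\<Sum>m\<in>?A. Poly_Mapping.single (\<psi> m) (Poly_Mapping.lookup p m))
                + (\<Sum>m\<in>?A. Poly_Mapping.single (\<psi> m) (Poly_Mapping.lookup q m))"
    by (simp add: lookup_add single_add sum.distrib)
  also have "\<dots> = monomial_map \<psi> p + monomial_map \<psi> q"
    using monomial_map_eq_sum_superset[of ?A p \<psi>] monomial_map_eq_sum_superset[of ?A q \<psi>]
    by simp
  finally show ?thesis .
qed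

lemma monomial_map_zero [simp]: "monomial_map \<psi> 0 = 0"
  by (simp add: monomial_map_def)

lemma monomial_map_single [simp]:
  "monomial_map \<psi> (Poly_Mapping.single a c) = Poly_Mapping.single (\<psi> a) c"
  by (simp add: monomial_map_def)

lemma monomial_map_sum: "monomial_map \<psi> (\<Sum>i\<in>I. f i) = (\<Sum>i\<in>I. monomial_map \<psi> (f i))"
  by (induction I rule: infinite_finite_induct) (auto simp: monomial_map_add)

lemma monomial_map_diff:
  "monomial_map \<psi> (p - q) = monomial_map \<psi> p - monomial_map \<psi> (q :: _ \<Rightarrow>\<^sub>0 'k::ab_group_add)"
proof -
  have "monomial_map \<psi> (p - q) + monomial_map \<psi> q = monomial_map \<psi> p"
    by (simp flip: monomial_map_add)
  then show ?thesis
    by (simp add: eq_diff_eq)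
qed

lemma poly_mapping_eq_sum_single:
  "p = (\<Sum>m\<in>Poly_Mapping.keys p. Poly_Mapping.single m (Poly_Mapping.lookup p m))"
  by (rule poly_mapping_eqI)
     (simp add: lookup_sum lookup_single when_def in_keys_iff sum.delta' cong: if_cong)

lemma monomial_map_mult:
  fixes p q :: "'a::comm_monoid_add \<Rightarrow>\<^sub>0 'k::comm_semiring_1"
    and \<psi> :: "'a \<Rightarrow> 'b::comm_monoid_add"
  assumes additive: "\<And>a b. \<psi> (a + b) = \<psi> a + \<psi> b"
  shows "monomial_map \<psi> (p * q) = monomial_map \<psi> p * monomial_map \<psi> q"
proof -
  let ?P = "Poly_Mapping.keys p" and ?Q = "Poly_Mapping.keys q"
  let ?c = "\<lambda>a b. Poly_Mapping.lookup p a * Poly_Mapping.lookup q b"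
  have expand: "(\<Sum>a\<in>?P. Poly_Mapping.single (\<phi> a) (Poly_Mapping.lookup p a)) *
                (\<Sum>b\<in>?Q. Poly_Mapping.single (\<phi> b) (Poly_Mapping.lookup q b))
      = (\<Sum>a\<in>?P. \<Sum>b\<in>?Q. Poly_Mapping.single (\<phi> a + \<phi> b) (?c a b))"
    for \<phi> :: "'a \<Rightarrow> 'c::comm_monoid_add"
    by (simp add: sum_distrib_left sum_distrib_right mult_single, subst sum.swap, simp)
  have "p * q = (\<Sum>a\<in>?P. \<Sum>b\<in>?Q. Poly_Mapping.single (a + b) (?c a b))"
    using expand[of id] poly_mapping_eq_sum_single[of p] poly_mapping_eq_sum_single[of q] by simp
  then have "monomial_map \<psi> (p * q)
      = (\<Sum>a\<in>?P. \<Sum>b\<in>?Q. Poly_Mapping.single (\<psi> a + \<psi> b) (?c a b))"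
    by (simp add: monomial_map_sum additive)
  also have "\<dots> = monomial_map \<psi> p * monomial_map \<psi> q"
    unfolding expand[of \<psi>, symmetric] by (simp add: monomial_map_def)
  finally show ?thesis .
qed

lemma lookup_monomial_map:
  "Poly_Mapping.lookup (monomial_map \<psi> p) u
     = (\<Sum>m\<in>{m\<in>Poly_Mapping.keys p. \<psi> m = u}. Poly_Mapping.lookup p m)"
  unfolding monomial_map_def lookup_sum lookup_single when_def
  by (simp add: sum.inter_filter)

lemma poly_ring_single: "Poly_Mapping.keys m \<subseteq> V \<Longrightarrow> Poly_Mapping.single m c \<in> poly_ring V"
  by (auto simp: poly_ring_def)

lemma poly_ring_zero [simp]: "0 \<in> poly_ring V"
  by (simp add: poly_ring_def)

lemma poly_ring_one [simp]: "1 \<in> poly_ring V"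
  by (auto simp: poly_ring_def keys_one)

lemma poly_ring_add:
  assumes "p \<in> poly_ring V" "q \<in> poly_ring V"
  shows "p + q \<in> poly_ring V"
  unfolding poly_ring_def mem_Collect_eq
proof
  fix m assume "m \<in> Poly_Mapping.keys (p + q)"
  then have "m \<in> Poly_Mapping.keys p \<union> Poly_Mapping.keys q"
    using keys_add[of p q] by blast
  then show "Poly_Mapping.keys m \<subseteq> V"
    using assms unfolding poly_ring_def by blast
qed

lemma poly_ring_uminus: "p \<in> poly_ring V \<Longrightarrow> - p \<in> poly_ring V"
  by (simp add: poly_ring_def)

lemma poly_ring_diff: "p \<in> poly_ring V \<Longrightarrow> q \<in> poly_ring V \<Longrightarrow> p - q \<in> poly_ring V"
  by (metis diff_conv_add_uminus poly_ring_add poly_ring_uminus)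

lemma keys_monom_add:
  "Poly_Mapping.keys (a + b :: 'a \<Rightarrow>\<^sub>0 nat) = Poly_Mapping.keys a \<union> Poly_Mapping.keys b"
  by (auto simp: in_keys_iff lookup_add)

lemma poly_ring_mult:
  assumes "p \<in> poly_ring V" "q \<in> poly_ring V"
  shows "p * q \<in> poly_ring V"
  unfolding poly_ring_def mem_Collect_eq
proof
  fix m assume "m \<in> Poly_Mapping.keys (p * q)"
  then obtain a b where "m = a + b" "a \<in> Poly_Mapping.keys p" "b \<in> Poly_Mapping.keys q"
    using keys_mult[of p q] by blast
  with assms show "Poly_Mapping.keys m \<subseteq> V"
    unfolding poly_ring_def by (auto simp: keys_monom_add)
qed

lemma poly_ring_sum: "(\<And>i. i \<in> I \<Longrightarrow> f i \<in> poly_ring V) \<Longrightarrow> (\<Sum>i\<in>I. f i) \<in> poly_ring V"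
  by (induction I rule: infinite_finite_induct) (auto intro: poly_ring_add)

lemma Var_in_poly_ring: "p \<in> V \<Longrightarrow> (Var p :: 'k::comm_ring_1 mpoly) \<in> poly_ring V"
  unfolding Var_def by (rule poly_ring_single) simp

lemma ideal_gen_zero: "0 \<in> ideal_gen R G"
  unfolding ideal_gen_def by (rule CollectI, rule exI[of _ "{}"]) auto

lemma ideal_gen_generator: "1 \<in> R \<Longrightarrow> g \<in> G \<Longrightarrow> g \<in> ideal_gen R G"
  unfolding ideal_gen_def
  by (rule CollectI, rule exI[of _ "{g}"], rule exI[of _ "\<lambda>_. 1"]) auto

lemma ideal_gen_add:
  assumes "x \<in> ideal_gen R G" "y \<in> ideal_gen R G"
    and "0 \<in> R" and R_add: "\<And>a b. a \<in> R \<Longrightarrow> b \<in> R \<Longrightarrow> a + b \<in> R"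
  shows "x + y \<in> ideal_gen R G"
proof -
  obtain F1 c1 where F1: "finite F1" "F1 \<subseteq> G" "\<forall>g\<in>F1. c1 g \<in> R" "x = (\<Sum>g\<in>F1. c1 g * g)"
    using assms(1) unfolding ideal_gen_def by blast
  obtain F2 c2 where F2: "finite F2" "F2 \<subseteq> G" "\<forall>g\<in>F2. c2 g \<in> R" "y = (\<Sum>g\<in>F2. c2 g * g)"
    using assms(2) unfolding ideal_gen_def by blast
  define c where "c g = (if g \<in> F1 then c1 g else 0) + (if g \<in> F2 then c2 g else 0)" for g
  have "(\<Sum>g\<in>F1 \<union> F2. c g * g) = (\<Sum>g\<in>F1 \<union> F2. if g \<in> F1 then c1 g * g else 0)
      + (\<Sum>g\<in>F1 \<union> F2. if g \<in> F2 then c2 g * g else 0)"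
    unfolding sum.distrib[symmetric] by (rule sum.cong) (auto simp: c_def distrib_right)
  also have "\<dots> = x + y"
    using F1 F2 by (simp add: sum.If_cases Int_absorb1 Int_absorb2)
  finally have "x + y = (\<Sum>g\<in>F1 \<union> F2. c g * g)" by simp
  moreover have "\<forall>g\<in>F1 \<union> F2. c g \<in> R"
    using F1 F2 assms(3) R_add unfolding c_def by simp
  ultimately show ?thesis
    unfolding ideal_gen_def using F1 F2 by (intro CollectI exI[of _ "F1 \<union> F2"] exI[of _ c]) auto
qed

lemma ideal_gen_mult:
  assumes R_mult: "\<And>a b. a \<in> R \<Longrightarrow> b \<in> R \<Longrightarrow> a * b \<in> R"
    and "r \<in> R" "x \<in> ideal_gen R G"
  shows "r * x \<in> ideal_gen R G"
proof -
  obtain F c where F: "finite F" "F \<subseteq> G" "\<forall>g\<in>F. c g \<in> R" "x = (\<Sum>g\<in>F. c g * g)"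
    using assms(3) unfolding ideal_gen_def by blast
  have "r * x = (\<Sum>g\<in>F. (r * c g) * g)"
    using F by (simp add: sum_distrib_left mult.assoc)
  then show ?thesis
    unfolding ideal_gen_def using F R_mult \<open>r \<in> R\<close>
    by (intro CollectI exI[of _ F] exI[of _ "\<lambda>g. r * c g"]) auto
qed

lemma ideal_gen_subset_poly_ring:
  "G \<subseteq> poly_ring V \<Longrightarrow> ideal_gen (poly_ring V) G \<subseteq> poly_ring V"
  unfolding ideal_gen_def by (auto intro!: poly_ring_sum poly_ring_mult)

section \<open>Binomial moves\<close>

type_synonym monom = "(nat \<times> nat) \<Rightarrow>\<^sub>0 nat"

abbreviation monomial :: "monom \<Rightarrow> 'k::comm_ring_1 mpoly" where
  "monomial m \<equiv> Poly_Mapping.single m 1"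

abbreviation var_exp :: "nat \<times> nat \<Rightarrow> monom" where
  "var_exp v \<equiv> Poly_Mapping.single v 1"

lemma Var_eq_monomial: "Var v = monomial (var_exp v)"
  by (simp add: Var_def)

lemma monomial_add: "(monomial (a + b) :: 'k::comm_ring_1 mpoly) = monomial a * monomial b"
  by (simp add: mult_single)

lemma Var_mult_Var: "(Var p * Var q :: 'k::comm_ring_1 mpoly) = monomial (var_exp p + var_exp q)"
  by (simp add: Var_eq_monomial monomial_add)

definition linked :: "(nat \<times> nat) set \<Rightarrow> 'k::comm_ring_1 mpoly set \<Rightarrow> monom \<Rightarrow> monom \<Rightarrow> bool" where
  "linked V G a b \<longleftrightarrow> (monomial a - monomial b :: 'k mpoly) \<in> ideal_gen (poly_ring V) G"

lemma linked_refl: "linked V G a a"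
  by (simp add: linked_def ideal_gen_zero)

lemma linked_trans:
  assumes "linked V (G :: 'k::comm_ring_1 mpoly set) a b" "linked V G b c"
  shows "linked V G a c"
proof -
  have "(monomial a - monomial b) + (monomial b - monomial c :: 'k mpoly) \<in> ideal_gen (poly_ring V) G"
    using assms unfolding linked_def by (rule ideal_gen_add) (auto intro: poly_ring_add)
  then show ?thesis
    unfolding linked_def by simp
qed

lemma linked_sym:
  assumes "linked V (G :: 'k::comm_ring_1 mpoly set) a b"
  shows "linked V G b a"
proof -
  have "(- 1) * (monomial a - monomial b :: 'k mpoly) \<in> ideal_gen (poly_ring V) G"
    using assms unfolding linked_def
    by (intro ideal_gen_mult[OF poly_ring_mult] poly_ring_uminus poly_ring_one)
  then show ?thesis unfolding linked_def by simp
qed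

lemma linked_add:
  assumes "linked V (G :: 'k::comm_ring_1 mpoly set) a b" "Poly_Mapping.keys r \<subseteq> V"
  shows "linked V G (r + a) (r + b)"
proof -
  have "(monomial r :: 'k mpoly) * (monomial a - monomial b) \<in> ideal_gen (poly_ring V) G"
    using assms unfolding linked_def by (intro ideal_gen_mult[OF poly_ring_mult] poly_ring_single)
  then show ?thesis unfolding linked_def by (simp add: right_diff_distrib mult_single)
qed

lemma linked_of_generator:
  "(monomial a - monomial b :: 'k::comm_ring_1 mpoly) \<in> G \<Longrightarrow> linked V G a b"
  unfolding linked_def by (intro ideal_gen_generator) simp

section \<open>Kernels of monomial maps\<close>

lemma kernel_monomial_map_collision:
  assumes "monomial_map \<psi> f = 0" "m \<in> Poly_Mapping.keys f"
  obtains m' where "m' \<in> Poly_Mapping.keys f" "m' \<noteq> m" "\<psi> m' = \<psi> m"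
proof (rule ccontr)
  assume "\<not> thesis"
  with that have "{u \<in> Poly_Mapping.keys f. \<psi> u = \<psi> m} = {m}" using assms(2) by blast
  then have "Poly_Mapping.lookup (monomial_map \<psi> f) (\<psi> m) = Poly_Mapping.lookup f m"
    by (simp add: lookup_monomial_map)
  with assms show False by (simp add: in_keys_iff)
qed

lemma kernel_monomial_map_subset_ideal_gen:
  fixes G :: "'k::comm_ring_1 mpoly set"
  assumes moves: "\<And>m m'. Poly_Mapping.keys m \<subseteq> V \<Longrightarrow> Poly_Mapping.keys m' \<subseteq> V \<Longrightarrow>
      \<psi> m = \<psi> m' \<Longrightarrow> linked V G m m'"
  shows "f \<in> poly_ring V \<Longrightarrow> monomial_map \<psi> f = 0 \<Longrightarrow> f \<in> ideal_gen (poly_ring V) G"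
proof (induction "card (Poly_Mapping.keys f)" arbitrary: f rule: less_induct)
  case less
  show ?case
  proof (cases "f = 0")
    case True
    then show ?thesis by (simp add: ideal_gen_zero)
  next
    case False
    then obtain m where m: "m \<in> Poly_Mapping.keys f"
      by (metis all_not_in_conv keys_eq_empty)
    obtain m' where m': "m' \<in> Poly_Mapping.keys f" "m' \<noteq> m" "\<psi> m' = \<psi> m"
      using kernel_monomial_map_collision[OF less.prems(2) m] .
    define c where "c = Poly_Mapping.lookup f m"
    define f' where "f' = f - Poly_Mapping.single m c + Poly_Mapping.single m' c"
    have keys_f': "Poly_Mapping.keys f' \<subseteq> Poly_Mapping.keys f - {m}"
      using m' unfolding f'_def
      by (auto simp: in_keys_iff lookup_add lookup_minus lookup_single when_def c_def split: if_splits)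
    have V: "Poly_Mapping.keys m \<subseteq> V" "Poly_Mapping.keys m' \<subseteq> V"
      using less.prems(1) m m' unfolding poly_ring_def by auto
    have "f' \<in> poly_ring V"
      unfolding f'_def using less.prems(1) V
      by (intro poly_ring_add poly_ring_diff poly_ring_single) auto
    moreover have "monomial_map \<psi> f' = 0"
      unfolding f'_def by (simp add: monomial_map_add monomial_map_diff less.prems m')
    moreover have "card (Poly_Mapping.keys f') < card (Poly_Mapping.keys f)"
      by (rule psubset_card_mono) (use keys_f' m in auto)
    ultimately have "f' \<in> ideal_gen (poly_ring V) G"
      using less.hyps by blast
    moreover have "Poly_Mapping.single 0 c * (monomial m - monomial m')
        \<in> ideal_gen (poly_ring V) G"
      using moves[OF V m'(3)[symmetric]] unfolding linked_def
      by (intro ideal_gen_mult[OF poly_ring_mult] poly_ring_single) auto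
    ultimately have "f' + Poly_Mapping.single 0 c * (monomial m - monomial m')
        \<in> ideal_gen (poly_ring V) G"
      by (rule ideal_gen_add) (auto intro: poly_ring_add)
    moreover have "f' + Poly_Mapping.single 0 c * (monomial m - monomial m') = f"
      unfolding f'_def by (simp add: right_diff_distrib mult_single)
    ultimately show ?thesis
      by simp
  qed
qed

lemma ideal_gen_eq_kernel_monomial_map:
  fixes G :: "'k::comm_ring_1 mpoly set" and \<psi> :: "monom \<Rightarrow> 'b::comm_monoid_add"
  assumes additive: "\<And>a b. \<psi> (a + b) = \<psi> a + \<psi> b"
    and G: "G \<subseteq> poly_ring V" "\<And>g. g \<in> G \<Longrightarrow> monomial_map \<psi> g = 0"
    and moves: "\<And>m m'. Poly_Mapping.keys m \<subseteq> V \<Longrightarrow> Poly_Mapping.keys m' \<subseteq> V \<Longrightarrow>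
      \<psi> m = \<psi> m' \<Longrightarrow> linked V G m m'"
  shows "ideal_gen (poly_ring V) G = {f \<in> poly_ring V. monomial_map \<psi> f = 0}"
proof
  show "{f \<in> poly_ring V. monomial_map \<psi> f = 0} \<subseteq> ideal_gen (poly_ring V) G"
    using kernel_monomial_map_subset_ideal_gen[OF moves] by blast
  show "ideal_gen (poly_ring V) G \<subseteq> {f \<in> poly_ring V. monomial_map \<psi> f = 0}"
  proof
    fix x assume x: "x \<in> ideal_gen (poly_ring V) G"
    then obtain F c where F: "finite F" "F \<subseteq> G" "x = (\<Sum>g\<in>F. c g * g)"
      unfolding ideal_gen_def by blast
    have "monomial_map \<psi> x = (\<Sum>g\<in>F. monomial_map \<psi> (c g) * monomial_map \<psi> g)"
      unfolding F(3) monomial_map_sum monomial_map_mult[OF additive] ..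
    also have "\<dots> = 0"
      using F G(2) by (simp add: subset_iff)
    finally show "x \<in> {f \<in> poly_ring V. monomial_map \<psi> f = 0}"
      using ideal_gen_subset_poly_ring[OF G(1)] x by blast
  qed
qed

lemma prime_ideal_in_kernel_monomial_map:
  fixes \<psi> :: "monom \<Rightarrow> monom"
  assumes additive: "\<And>a b. \<psi> (a + b) = \<psi> a + \<psi> b"
  shows "prime_ideal_in (poly_ring V :: 'k::idom mpoly set)
           {f \<in> poly_ring V. monomial_map \<psi> f = 0}"
  (is "prime_ideal_in _ ?K")
  unfolding prime_ideal_in_def
proof (intro conjI ballI impI)
  show "?K \<subseteq> poly_ring V" "0 \<in> ?K"
    by auto
  have "\<psi> 0 = 0"
    using additive[of 0 0] by simp
  then have "monomial_map \<psi> (1 :: 'k mpoly) = 1"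
    by (metis monomial_map_single single_one)
  then show "?K \<noteq> poly_ring V"
    using poly_ring_one[of V] by (metis (mono_tags, lifting) mem_Collect_eq one_neq_zero)
next
  fix a b :: "'k mpoly" assume "a \<in> ?K" "b \<in> ?K"
  then show "a + b \<in> ?K"
    by (simp add: monomial_map_add poly_ring_add)
next
  fix r a :: "'k mpoly" assume "r \<in> poly_ring V" "a \<in> ?K"
  then show "r * a \<in> ?K"
    by (simp add: monomial_map_mult[OF additive] poly_ring_mult)
next
  fix a b :: "'k mpoly" assume "a \<in> poly_ring V" "b \<in> poly_ring V" "a * b \<in> ?K"
  then show "a \<in> ?K \<or> b \<in> ?K"
    by (simp add: monomial_map_mult[OF additive])
qed

definition wdeg :: "(nat \<times> nat \<Rightarrow> nat) \<Rightarrow> monom \<Rightarrow> nat" where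
  "wdeg h m = (\<Sum>v\<in>Poly_Mapping.keys m. Poly_Mapping.lookup m v * h v)"

lemma wdeg_eq_sum_superset:
  assumes "finite A" "Poly_Mapping.keys m \<subseteq> A"
  shows "wdeg h m = (\<Sum>v\<in>A. Poly_Mapping.lookup m v * h v)"
  unfolding wdeg_def
  by (rule sum.mono_neutral_left) (use assms in \<open>auto simp: in_keys_iff\<close>)

lemma wdeg_add: "wdeg h (a + b) = wdeg h a + wdeg h b"
proof -
  let ?A = "Poly_Mapping.keys a \<union> Poly_Mapping.keys b"
  have "wdeg h (a + b) = (\<Sum>v\<in>?A. Poly_Mapping.lookup (a + b) v * h v)"
    by (rule wdeg_eq_sum_superset) (auto simp: keys_monom_add)
  also have "\<dots> = (\<Sum>v\<in>?A. Poly_Mapping.lookup a v * h v) + (\<Sum>v\<in>?A. Poly_Mapping.lookup b v * h v)"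
    by (simp add: lookup_add sum.distrib distrib_right)
  also have "\<dots> = wdeg h a + wdeg h b"
    using wdeg_eq_sum_superset[of ?A a h] wdeg_eq_sum_superset[of ?A b h] by simp
  finally show ?thesis .
qed

lemma wdeg_single [simp]: "wdeg h (Poly_Mapping.single v k) = k * h v"
  by (cases "k = 0") (simp_all add: wdeg_def)

lemma lookup_mult_le_wdeg: "v \<in> Poly_Mapping.keys m \<Longrightarrow> Poly_Mapping.lookup m v * h v \<le> wdeg h m"
  unfolding wdeg_def by (rule member_le_sum) auto

lemma wdeg_pos_imp: "0 < wdeg h m \<Longrightarrow> \<exists>v\<in>Poly_Mapping.keys m. 0 < h v"
  unfolding wdeg_def by (metis (no_types, lifting) mult_0_right neq0_conv sum.neutral)

lemma wdeg_cong: "(\<And>v. v \<in> Poly_Mapping.keys m \<Longrightarrow> h v = h' v) \<Longrightarrow> wdeg h m = wdeg h' m"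
  unfolding wdeg_def by (rule sum.cong) auto

lemma wdeg_mono: "(\<And>v. v \<in> Poly_Mapping.keys m \<Longrightarrow> h v \<le> h' v) \<Longrightarrow> wdeg h m \<le> wdeg h' m"
  unfolding wdeg_def by (rule sum_mono) auto

lemma wdeg_plus_weight: "wdeg (\<lambda>v. h v + h' v) m = wdeg h m + wdeg h' m"
  unfolding wdeg_def by (simp add: distrib_left sum.distrib)

lemma wdeg_sum_weight: "wdeg (\<lambda>v. \<Sum>i\<in>I. h i v) m = (\<Sum>i\<in>I. wdeg (h i) m)"
  unfolding wdeg_def by (simp add: sum_distrib_left sum.swap[of _ I])

definition subst_monom :: "(nat \<times> nat \<Rightarrow> monom) \<Rightarrow> monom \<Rightarrow> monom" where
  "subst_monom f m
     = (\<Sum>v\<in>Poly_Mapping.keys m. Poly_Mapping.map ((*) (Poly_Mapping.lookup m v)) (f v))"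

lemma lookup_subst_monom:
  "Poly_Mapping.lookup (subst_monom f m) u = wdeg (\<lambda>v. Poly_Mapping.lookup (f v) u) m"
  unfolding subst_monom_def wdeg_def lookup_sum
  by (rule sum.cong) (auto simp: Poly_Mapping.map.rep_eq when_def)

lemma subst_monom_add: "subst_monom f (a + b) = subst_monom f a + subst_monom f b"
  by (rule poly_mapping_eqI) (simp add: lookup_subst_monom lookup_add wdeg_add)

lemma subst_monom_ev [simp]: "subst_monom f (var_exp v) = f v"
  by (rule poly_mapping_eqI) (simp add: lookup_subst_monom)

lemma monomial_map_subst_monom_binomial:
  "monomial_map (subst_monom f) (Var p * Var q - Var r * Var s :: 'k::comm_ring_1 mpoly)
     = monomial (f p + f q) - monomial (f r + f s)"
  unfolding Var_mult_Var monomial_map_diff monomial_map_single subst_monom_add subst_monom_ev ..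

definition row_deg :: "monom \<Rightarrow> nat \<Rightarrow> nat" where
  "row_deg m i = wdeg (\<lambda>v. if fst v = i then 1 else 0) m"

definition col_deg :: "monom \<Rightarrow> nat \<Rightarrow> nat" where
  "col_deg m j = wdeg (\<lambda>v. if snd v = j then 1 else 0) m"

definition index_deg :: "monom \<Rightarrow> nat \<Rightarrow> nat" where
  "index_deg m x = row_deg m x + col_deg m x"

definition total_deg :: "monom \<Rightarrow> nat" where
  "total_deg m = wdeg (\<lambda>_. 1) m"

definition row_weight :: "monom \<Rightarrow> nat" where
  "row_weight m = wdeg fst m"

lemma row_deg_add: "row_deg (a + b) i = row_deg a i + row_deg b i"
  by (simp add: row_deg_def wdeg_add)

lemma col_deg_add: "col_deg (a + b) j = col_deg a j + col_deg b j"
  by (simp add: col_deg_def wdeg_add)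

lemma index_deg_add: "index_deg (a + b) x = index_deg a x + index_deg b x"
  by (simp add: index_deg_def row_deg_add col_deg_add)

lemma total_deg_add: "total_deg (a + b) = total_deg a + total_deg b"
  by (simp add: total_deg_def wdeg_add)

lemma row_weight_add: "row_weight (a + b) = row_weight a + row_weight b"
  by (simp add: row_weight_def wdeg_add)

lemma row_deg_single [simp]: "row_deg (Poly_Mapping.single v k) i = (if fst v = i then k else 0)"
  by (simp add: row_deg_def)

lemma col_deg_single [simp]: "col_deg (Poly_Mapping.single v k) j = (if snd v = j then k else 0)"
  by (simp add: col_deg_def)

lemma index_deg_single [simp]:
  "index_deg (Poly_Mapping.single v k) x = (if fst v = x then k else 0) + (if snd v = x then k else 0)"
  by (simp add: index_deg_def)

lemma total_deg_single [simp]: "total_deg (Poly_Mapping.single v k) = k"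
  by (simp add: total_deg_def)

lemma row_weight_single [simp]: "row_weight (Poly_Mapping.single v k) = k * fst v"
  by (simp add: row_weight_def)

lemma row_deg_pos: "v \<in> Poly_Mapping.keys m \<Longrightarrow> 0 < row_deg m (fst v)"
  using lookup_mult_le_wdeg[of v m "\<lambda>w. if fst w = fst v then 1 else 0"]
  by (simp add: row_deg_def in_keys_iff)

lemma col_deg_pos: "v \<in> Poly_Mapping.keys m \<Longrightarrow> 0 < col_deg m (snd v)"
  using lookup_mult_le_wdeg[of v m "\<lambda>w. if snd w = snd v then 1 else 0"]
  by (simp add: col_deg_def in_keys_iff)

lemma row_deg_eq_0_iff: "row_deg m = (\<lambda>_. 0) \<longleftrightarrow> m = 0"
proof
  assume "row_deg m = (\<lambda>_. 0)"
  then show "m = 0"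
    using row_deg_pos by (metis all_not_in_conv keys_eq_empty less_irrefl)
qed (simp add: fun_eq_iff row_deg_def wdeg_def)

lemma row_deg_pos_imp: "0 < row_deg m i \<Longrightarrow> \<exists>j. (i, j) \<in> Poly_Mapping.keys m"
  using wdeg_pos_imp[of "\<lambda>v. if fst v = i then 1 else 0" m]
  unfolding row_deg_def by (auto split: if_splits)

lemma col_deg_pos_imp: "0 < col_deg m j \<Longrightarrow> \<exists>i. (i, j) \<in> Poly_Mapping.keys m"
  using wdeg_pos_imp[of "\<lambda>v. if snd v = j then 1 else 0" m]
  unfolding col_deg_def by (auto split: if_splits)

lemma monom_split_key: "v \<in> Poly_Mapping.keys m \<Longrightarrow> m = (m - var_exp v) + var_exp v"
  by (rule poly_mapping_eqI) (auto simp: lookup_add lookup_minus lookup_single when_def in_keys_iff)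

lemma monom_split_two:
  assumes "v \<in> Poly_Mapping.keys m" "w \<in> Poly_Mapping.keys m" "v \<noteq> w"
  shows "m = (m - var_exp v - var_exp w) + (var_exp v + var_exp w)"
proof -
  have w: "w \<in> Poly_Mapping.keys (m - var_exp v)"
    using assms by (simp add: in_keys_iff lookup_minus lookup_single)
  have "m = (m - var_exp v) + var_exp v"
    by (rule monom_split_key[OF assms(1)])
  also have "m - var_exp v = (m - var_exp v - var_exp w) + var_exp w"
    by (rule monom_split_key[OF w])
  finally show ?thesis
    by (simp add: ac_simps)
qed

lemma keys_monom_diff_subset: "Poly_Mapping.keys (m - a :: monom) \<subseteq> Poly_Mapping.keys m"
  by (auto simp: in_keys_iff lookup_minus)

section \<open>Monomials with equal row and column degrees\<close>

lemma linked_2x2: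
  fixes G :: "'k::comm_ring_1 mpoly set"
  assumes minors: "two_minors T Var \<subseteq> G"
    and "i < k" "c \<noteq> c'" "(i, c) \<in> T" "(i, c') \<in> T" "(k, c) \<in> T" "(k, c') \<in> T"
  shows "linked T G (var_exp (i, c) + var_exp (k, c')) (var_exp (i, c') + var_exp (k, c))"
proof -
  have minor: "monomial (var_exp (i, a) + var_exp (k, b)) - monomial (var_exp (i, b) + var_exp (k, a))
      \<in> (two_minors T Var :: 'k mpoly set)"
    if "a < b" "(i, a) \<in> T" "(i, b) \<in> T" "(k, a) \<in> T" "(k, b) \<in> T" for a b
    unfolding Var_mult_Var[symmetric] two_minors_def using that \<open>i < k\<close> by blast
  show ?thesis
  proof (cases "c < c'")
    case True
    then show ?thesis
      using minor[of c c'] assms by (blast intro: linked_of_generator)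
  next
    case False
    then have "c' < c"
      using \<open>c \<noteq> c'\<close> by simp
    then show ?thesis
      using minor[of c' c] assms by (blast intro: linked_of_generator linked_sym)
  qed
qed

locale row_nested =
  fixes T :: "(nat \<times> nat) set"
  assumes nested: "\<And>i k c c'. (i, c) \<in> T \<Longrightarrow> (k, c') \<in> T \<Longrightarrow> i < k \<Longrightarrow> (i, c') \<in> T"
begin

lemma linked_move_into_row:
  fixes G :: "'k::comm_ring_1 mpoly set"
  assumes minors: "two_minors T Var \<subseteq> G"
    and m: "Poly_Mapping.keys m \<subseteq> T" "(i, c) \<in> Poly_Mapping.keys m" "(k, c') \<in> Poly_Mapping.keys m"
    and "i \<le> k" "(k, c) \<in> T"
  obtains m' where "(k, c) \<in> Poly_Mapping.keys m'" "Poly_Mapping.keys m' \<subseteq> T"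
    "row_deg m' = row_deg m" "col_deg m' = col_deg m" "linked T G m m'"
proof (cases "i = k \<or> c = c'")
  case True
  then have "(k, c) \<in> Poly_Mapping.keys m"
    using m by auto
  then show ?thesis
    using that m(1) linked_refl by blast
next
  case False
  then have "i < k" "c \<noteq> c'"
    using \<open>i \<le> k\<close> by auto
  have "(i, c') \<in> T"
    using nested m \<open>i < k\<close> by blast
  define r where "r = m - var_exp (i, c) - var_exp (k, c')"
  have m_eq: "m = r + (var_exp (i, c) + var_exp (k, c'))"
    unfolding r_def using monom_split_two[OF m(2,3)] \<open>i < k\<close> by simp
  have r: "Poly_Mapping.keys r \<subseteq> T"
    using m(1) keys_monom_diff_subset unfolding r_def by blast
  define m' where "m' = r + (var_exp (i, c') + var_exp (k, c))"
  have "linked T G m m'"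
    using linked_add[OF linked_2x2[OF minors \<open>i < k\<close> \<open>c \<noteq> c'\<close>] r] m m_eq \<open>(i, c') \<in> T\<close> \<open>(k, c) \<in> T\<close>
    by (simp add: m'_def subset_iff)
  moreover have "(k, c) \<in> Poly_Mapping.keys m'"
    by (simp add: m'_def in_keys_iff lookup_add)
  moreover have "Poly_Mapping.keys m' \<subseteq> T"
    using r \<open>(i, c') \<in> T\<close> \<open>(k, c) \<in> T\<close> by (simp add: m'_def keys_monom_add)
  moreover have "row_deg m' = row_deg m" "col_deg m' = col_deg m"
    by (simp_all add: m_eq m'_def fun_eq_iff row_deg_add col_deg_add)
  ultimately show ?thesis
    using that by blast
qed

lemma linked_to_common_key:
  fixes G :: "'k::comm_ring_1 mpoly set"
  assumes minors: "two_minors T Var \<subseteq> G"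
    and keys: "Poly_Mapping.keys m \<subseteq> T" "Poly_Mapping.keys m' \<subseteq> T"
    and margins: "row_deg m = row_deg m'" "col_deg m = col_deg m'"
    and "m \<noteq> 0"
  obtains v m'' where "v \<in> Poly_Mapping.keys m" "v \<in> Poly_Mapping.keys m''"
    "Poly_Mapping.keys m'' \<subseteq> T" "row_deg m'' = row_deg m'" "col_deg m'' = col_deg m'"
    "linked T G m' m''"
proof -
  define k where "k = Max (fst ` Poly_Mapping.keys m)"
  have k_max: "fst v \<le> k" if "v \<in> Poly_Mapping.keys m" for v
    unfolding k_def using that by simp
  have "k \<in> fst ` Poly_Mapping.keys m"
    unfolding k_def using \<open>m \<noteq> 0\<close> by (intro Max_in) auto
  then obtain c where kc: "(k, c) \<in> Poly_Mapping.keys m"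
    by force
  obtain c' where kc': "(k, c') \<in> Poly_Mapping.keys m'"
    using row_deg_pos[OF kc] row_deg_pos_imp margins(1) by force
  obtain i where ic: "(i, c) \<in> Poly_Mapping.keys m'"
    using col_deg_pos[OF kc] col_deg_pos_imp margins(2) by force
  have "i \<le> k"
    using row_deg_pos[OF ic] row_deg_pos_imp margins(1) k_max by force
  moreover have "(k, c) \<in> T"
    using kc keys(1) by blast
  ultimately show ?thesis
    using linked_move_into_row[OF minors keys(2) ic kc'] that kc by metis
qed

lemma linked_if_equal_margins:
  fixes G :: "'k::comm_ring_1 mpoly set"
  assumes minors: "two_minors T Var \<subseteq> G"
  shows "Poly_Mapping.keys m \<subseteq> T \<Longrightarrow> Poly_Mapping.keys m' \<subseteq> T \<Longrightarrow>
    row_deg m = row_deg m' \<Longrightarrow> col_deg m = col_deg m' \<Longrightarrow> linked T G m m'"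
proof (induction "total_deg m" arbitrary: m m' rule: less_induct)
  case less
  show ?case
  proof (cases "m = 0")
    case True
    then have "m' = 0"
      using less.prems(3) row_deg_eq_0_iff by metis
    with True show ?thesis
      by (simp add: linked_refl)
  next
    case False
    then obtain v m'' where v: "v \<in> Poly_Mapping.keys m" "v \<in> Poly_Mapping.keys m''"
      and m'': "Poly_Mapping.keys m'' \<subseteq> T" "row_deg m'' = row_deg m'" "col_deg m'' = col_deg m'"
        "linked T G m' m''"
      using linked_to_common_key[OF minors less.prems] by blast
    define m0 where "m0 = m - var_exp v"
    define m0'' where "m0'' = m'' - var_exp v"
    have m_eq: "m = m0 + var_exp v" and m''_eq: "m'' = m0'' + var_exp v"
      unfolding m0_def m0''_def using monom_split_key v by blast+
    have "total_deg m0 < total_deg m"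
      using m_eq total_deg_add[of m0 "var_exp v"] by simp
    moreover have "Poly_Mapping.keys m0 \<subseteq> T" "Poly_Mapping.keys m0'' \<subseteq> T"
      using less.prems(1) m''(1) keys_monom_diff_subset unfolding m0_def m0''_def by blast+
    moreover have "row_deg m0 = row_deg m0''" "col_deg m0 = col_deg m0''"
      using less.prems(3,4) m''(2,3) m_eq m''_eq
      by (simp_all add: fun_eq_iff row_deg_add col_deg_add) (metis add_right_cancel)+
    ultimately have "linked T G m0 m0''"
      using less.hyps by blast
    then have "linked T G (var_exp v + m0) (var_exp v + m0'')"
      by (rule linked_add) (use less.prems(1) v(1) in auto)
    then have "linked T G m m''"
      using m_eq m''_eq by (simp add: add.commute)
    then show ?thesis
      using linked_trans linked_sym[OF m''(4)] by blast
  qed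
qed

end

section \<open>Separated monomials\<close>

definition separated :: "monom \<Rightarrow> bool" where
  "separated m \<longleftrightarrow> (\<forall>v\<in>Poly_Mapping.keys m. \<forall>w\<in>Poly_Mapping.keys m. fst w \<le> snd v)"

lemma ex_linked_separated:
  fixes G :: "'k::comm_ring_1 mpoly set"
  assumes upper: "\<And>v. v \<in> T \<Longrightarrow> fst v \<le> snd v"
    and closed: "\<And>a b c d. (a, b) \<in> T \<Longrightarrow> (c, d) \<in> T \<Longrightarrow> b < c \<Longrightarrow> (a, c) \<in> T \<and> (b, d) \<in> T"
    and moves: "\<And>a b c d. (a, b) \<in> T \<Longrightarrow> (c, d) \<in> T \<Longrightarrow> b < c \<Longrightarrow>
      linked T G (var_exp (a, b) + var_exp (c, d)) (var_exp (a, c) + var_exp (b, d))"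
  shows "Poly_Mapping.keys m \<subseteq> T \<Longrightarrow> \<exists>m'. Poly_Mapping.keys m' \<subseteq> T \<and> separated m'
    \<and> index_deg m' = index_deg m \<and> linked T G m m'"
proof (induction "row_weight m" arbitrary: m rule: less_induct)
  case less
  show ?case
  proof (cases "separated m")
    case True
    then show ?thesis
      using less.prems linked_refl by blast
  next
    case False
    then obtain a b c d where ab: "(a, b) \<in> Poly_Mapping.keys m" and cd: "(c, d) \<in> Poly_Mapping.keys m"
      and "b < c"
      unfolding separated_def by force
    have T: "(a, b) \<in> T" "(c, d) \<in> T"
      using ab cd less.prems by blast+
    then have "a < c"
      using upper[of "(a, b)"] \<open>b < c\<close> by simp
    define r where "r = m - var_exp (a, b) - var_exp (c, d)"
    have m_eq: "m = r + (var_exp (a, b) + var_exp (c, d))"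
      unfolding r_def using monom_split_two[OF ab cd] \<open>a < c\<close> by simp
    have r: "Poly_Mapping.keys r \<subseteq> T"
      using less.prems keys_monom_diff_subset unfolding r_def by blast
    define m1 where "m1 = r + (var_exp (a, c) + var_exp (b, d))"
    have "linked T G m m1"
      unfolding m1_def using linked_add[OF moves[OF T \<open>b < c\<close>] r] m_eq by simp
    moreover have "Poly_Mapping.keys m1 \<subseteq> T"
      using r closed[OF T \<open>b < c\<close>] by (simp add: m1_def keys_monom_add)
    moreover have "index_deg m1 = index_deg m"
      by (simp add: m_eq m1_def fun_eq_iff index_deg_add)
    moreover have "row_weight m1 < row_weight m"
      using \<open>b < c\<close> by (simp add: m_eq m1_def row_weight_add)
    ultimately show ?thesis
      using less.hyps linked_trans by metis
  qed
qed

lemma sum_row_deg_lessThan: "(\<Sum>x<s. row_deg m x) = wdeg (\<lambda>v. if fst v < s then 1 else 0) m"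
  unfolding row_deg_def wdeg_sum_weight[symmetric] by (rule wdeg_cong) simp

lemma sum_col_deg_lessThan: "(\<Sum>x<s. col_deg m x) = wdeg (\<lambda>v. if snd v < s then 1 else 0) m"
  unfolding col_deg_def wdeg_sum_weight[symmetric] by (rule wdeg_cong) simp

lemma sum_index_deg_lessThan:
  "(\<Sum>x<s. index_deg m x) = wdeg (\<lambda>v. (if fst v < s then 1 else 0) + (if snd v < s then 1 else 0)) m"
  unfolding index_deg_def sum.distrib sum_row_deg_lessThan sum_col_deg_lessThan wdeg_plus_weight ..

lemma separated_sum_row_deg_lessThan:
  assumes "separated m"
  shows "(\<Sum>x<s. row_deg m x) = min (total_deg m) (\<Sum>x<s. index_deg m x)"
proof (cases "\<forall>v\<in>Poly_Mapping.keys m. fst v < s")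
  case True
  then have "(\<Sum>x<s. row_deg m x) = total_deg m"
    unfolding sum_row_deg_lessThan total_deg_def by (intro wdeg_cong) auto
  moreover have "(\<Sum>x<s. row_deg m x) \<le> (\<Sum>x<s. index_deg m x)"
    by (rule sum_mono) (simp add: index_deg_def)
  ultimately show ?thesis
    by simp
next
  case False
  then obtain w where "w \<in> Poly_Mapping.keys m" "s \<le> fst w"
    by force
  then have "\<forall>v\<in>Poly_Mapping.keys m. s \<le> snd v"
    using assms unfolding separated_def by force
  then have "(\<Sum>x<s. index_deg m x) = (\<Sum>x<s. row_deg m x)"
    unfolding sum_index_deg_lessThan sum_row_deg_lessThan by (intro wdeg_cong) auto
  moreover have "(\<Sum>x<s. row_deg m x) \<le> total_deg m"
    unfolding sum_row_deg_lessThan total_deg_def by (rule wdeg_mono) auto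
  ultimately show ?thesis
    by simp
qed

lemma sum_index_deg_lessThan_eq_total_deg:
  assumes "\<forall>v\<in>Poly_Mapping.keys m. fst v < s \<and> snd v < s"
  shows "(\<Sum>x<s. index_deg m x) = 2 * total_deg m"
proof -
  have "(\<Sum>x<s. index_deg m x) = wdeg (\<lambda>v. 1 + 1) m"
    unfolding sum_index_deg_lessThan using assms by (intro wdeg_cong) auto
  then show ?thesis
    unfolding wdeg_plus_weight total_deg_def by simp
qed

lemma separated_margins_eq:
  assumes "separated m1" "separated m2" "index_deg m1 = index_deg m2"
  shows "row_deg m1 = row_deg m2" "col_deg m1 = col_deg m2"
proof -
  let ?K = "Poly_Mapping.keys m1 \<union> Poly_Mapping.keys m2"
  define s where "s = Suc (\<Sum>v\<in>?K. fst v + snd v)"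
  have "fst v < s \<and> snd v < s" if "v \<in> ?K" for v
  proof -
    have "fst v + snd v \<le> (\<Sum>v\<in>?K. fst v + snd v)"
      using that by (intro member_le_sum) auto
    then show ?thesis
      unfolding s_def by simp
  qed
  then have "2 * total_deg m1 = 2 * total_deg m2"
    using sum_index_deg_lessThan_eq_total_deg[of m1 s] sum_index_deg_lessThan_eq_total_deg[of m2 s]
      assms(3) by simp
  then have partial_sums: "(\<Sum>x<t. row_deg m1 x) = (\<Sum>x<t. row_deg m2 x)" for t
    using separated_sum_row_deg_lessThan[OF assms(1)] separated_sum_row_deg_lessThan[OF assms(2)]
      assms(3) by simp
  show "row_deg m1 = row_deg m2"
  proof
    fix x
    show "row_deg m1 x = row_deg m2 x"
      using partial_sums[of "Suc x"] partial_sums[of x] by simp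
  qed
  then show "col_deg m1 = col_deg m2"
    using assms(3) by (simp add: fun_eq_iff index_deg_def)
qed

section \<open>The tableaux \<open>T\<^bsub>\<lambda>-\<mu>\<^esub>\<close> and \<open>S\<^bsub>\<lambda>-\<mu>\<^esub>\<close>\<close>

text \<open>Exponent vectors of \<open>x\<^sub>i y\<^sub>j\<close> and \<open>x\<^sub>i x\<^sub>j\<close>, where \<open>x\<^sub>i\<close> and \<open>y\<^sub>j\<close> are encoded as the
  variables \<open>(0, i)\<close> and \<open>(1, j)\<close>.\<close>

definition exp_xy :: "nat \<times> nat \<Rightarrow> monom" where
  "exp_xy v = var_exp (0, fst v) + var_exp (1, snd v)"

definition exp_xx :: "nat \<times> nat \<Rightarrow> monom" where
  "exp_xx v = var_exp (0, fst v) + var_exp (0, snd v)"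

lemma lookup_subst_exp_xy_row: "Poly_Mapping.lookup (subst_monom exp_xy m) (0, i) = row_deg m i"
  unfolding lookup_subst_monom row_deg_def
  by (rule wdeg_cong) (simp add: exp_xy_def lookup_add lookup_single when_def)

lemma lookup_subst_exp_xy_col: "Poly_Mapping.lookup (subst_monom exp_xy m) (1, j) = col_deg m j"
  unfolding lookup_subst_monom col_deg_def
  by (rule wdeg_cong) (simp add: exp_xy_def lookup_add lookup_single when_def)

lemma lookup_subst_exp_xx: "Poly_Mapping.lookup (subst_monom exp_xx m) (0, x) = index_deg m x"
  unfolding lookup_subst_monom index_deg_def row_deg_def col_deg_def wdeg_plus_weight[symmetric]
  by (rule wdeg_cong) (simp add: exp_xx_def lookup_add lookup_single when_def)

locale skew_tableau =
  fixes n :: nat and lam mu :: "nat \<Rightarrow> nat"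
  assumes lam_step: "\<And>i. 1 \<le> i \<Longrightarrow> i < n \<Longrightarrow> lam (i + 1) \<le> lam i"
    and mu_step: "\<And>i. 1 \<le> i \<Longrightarrow> i < n \<Longrightarrow> mu i \<le> mu (i + 1)"
    and mu_lower: "\<And>i. 1 \<le> i \<Longrightarrow> i \<le> n \<Longrightarrow> i - 1 \<le> mu i"
begin

abbreviation "T \<equiv> tab_pos n lam mu"

abbreviation "S \<equiv> sym_pos n lam mu"

lemma mem_T_iff: "(i, j) \<in> T \<longleftrightarrow> 1 \<le> i \<and> i \<le> n \<and> mu i < j \<and> j \<le> lam i"
  by (simp add: tab_pos_def)

lemma mu_mono:
  assumes "1 \<le> i" "i \<le> k" "k \<le> n"
  shows "mu i \<le> mu k"
  using assms(2,3)
proof (induction k rule: dec_induct)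
  case (step k)
  then show ?case
    using mu_step[of k] assms(1) by simp
qed simp

lemma lam_antimono:
  assumes "1 \<le> i" "i \<le> k" "k \<le> n"
  shows "lam k \<le> lam i"
  using assms(2,3)
proof (induction k rule: dec_induct)
  case (step k)
  then show ?case
    using lam_step[of k] assms(1) by simp
qed simp

sublocale row_nested T
proof
  fix i k c c' assume "(i, c) \<in> T" "(k, c') \<in> T" "i < k"
  then show "(i, c') \<in> T"
    unfolding mem_T_iff using mu_mono[of i k] lam_antimono[of i k] by force
qed

lemma T_upper: "v \<in> T \<Longrightarrow> fst v \<le> snd v"
  using mu_lower by (cases v) (force simp: mem_T_iff)

lemma T_exchange_closed:
  assumes "(a, b) \<in> T" "(c, d) \<in> T" "b < c"
  shows "(a, c) \<in> T \<and> (b, d) \<in> T"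
proof -
  have "a \<le> b" "c \<le> d"
    using T_upper assms by force+
  with assms show ?thesis
    unfolding mem_T_iff using lam_antimono[of a c] lam_antimono[of b c] mu_mono[of b c] by auto
qed

lemma sym_entry_eq_Var: "p \<in> T \<Longrightarrow> sym_entry n lam mu p = Var p"
  by (simp add: sym_entry_def)

lemma two_minors_T_subset_S:
  "two_minors T Var \<subseteq> (two_minors S (sym_entry n lam mu) :: 'k::comm_ring_1 mpoly set)"
proof
  fix g :: "'k mpoly" assume "g \<in> two_minors T Var"
  then obtain i j k l where g: "g = Var (i, j) * Var (k, l) - Var (i, l) * Var (k, j)"
    and "i < k" "j < l"
    and T: "(i, j) \<in> T" "(i, l) \<in> T" "(k, j) \<in> T" "(k, l) \<in> T"
    unfolding two_minors_def by blast
  have "g = sym_entry n lam mu (i, j) * sym_entry n lam mu (k, l)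
      - sym_entry n lam mu (i, l) * sym_entry n lam mu (k, j)"
    using g T by (simp add: sym_entry_eq_Var)
  moreover have "(i, j) \<in> S" "(i, l) \<in> S" "(k, j) \<in> S" "(k, l) \<in> S"
    using T by (auto simp: sym_pos_def)
  ultimately show "g \<in> two_minors S (sym_entry n lam mu)"
    unfolding two_minors_def using \<open>i < k\<close> \<open>j < l\<close> by blast
qed

lemma exchange_in_two_minors_S:
  assumes "(a, b) \<in> T" "(c, d) \<in> T" "b < c"
  shows "(monomial (var_exp (a, b) + var_exp (c, d)) - monomial (var_exp (a, c) + var_exp (b, d)) :: 'k::comm_ring_1 mpoly)
    \<in> two_minors S (sym_entry n lam mu)"
proof -
  have "a \<le> b" "c \<le> d"
    using T_upper assms by force+
  have ac_bd: "(a, c) \<in> T" "(b, d) \<in> T"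
    using T_exchange_closed assms by blast+
  \<comment> \<open>the 2-minor of \<open>S\<close> in rows \<open>a < d\<close> and columns \<open>b < c\<close>\<close>
  have "sym_entry n lam mu (d, c) = (Var (c, d) :: 'k mpoly)"
    using T_upper[of "(d, c)"] \<open>c \<le> d\<close> by (cases "c = d") (auto simp: sym_entry_def)
  moreover have "sym_entry n lam mu (d, b) = (Var (b, d) :: 'k mpoly)"
    using T_upper[of "(d, b)"] \<open>c \<le> d\<close> \<open>b < c\<close> by (auto simp: sym_entry_def)
  ultimately have "(monomial (var_exp (a, b) + var_exp (c, d)) - monomial (var_exp (a, c) + var_exp (b, d)) :: 'k mpoly)
      = sym_entry n lam mu (a, b) * sym_entry n lam mu (d, c)
        - sym_entry n lam mu (a, c) * sym_entry n lam mu (d, b)"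
    using assms(1) ac_bd(1) by (simp add: sym_entry_eq_Var Var_mult_Var)
  moreover have "(a, b) \<in> S" "(a, c) \<in> S" "(d, c) \<in> S" "(d, b) \<in> S"
    using assms ac_bd by (auto simp: sym_pos_def)
  moreover have "a < d"
    using \<open>a \<le> b\<close> \<open>b < c\<close> \<open>c \<le> d\<close> by simp
  ultimately show ?thesis
    unfolding two_minors_def using \<open>b < c\<close> by blast
qed

lemma sym_entry_eq_Var_T:
  assumes "p \<in> S"
  obtains q where "q \<in> T" "sym_entry n lam mu p = Var q" "exp_xx q = exp_xx p"
proof (cases "p \<in> T")
  case True
  then show ?thesis
    using that by (simp add: sym_entry_def)
next
  case False
  then have "(snd p, fst p) \<in> T"
    using assms by (cases p) (simp add: sym_pos_def)
  moreover have "exp_xx (snd p, fst p) = exp_xx p"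
    by (simp add: exp_xx_def add.commute)
  ultimately show ?thesis
    using that False by (simp add: sym_entry_def)
qed

lemma two_minors_T_in_kernel:
  "two_minors T Var \<subseteq> {f \<in> poly_ring T. monomial_map (subst_monom exp_xy) f = (0 :: 'k::comm_ring_1 mpoly)}"
  unfolding two_minors_def
  by (auto simp: monomial_map_subst_monom_binomial exp_xy_def ac_simps
      intro!: poly_ring_diff poly_ring_mult Var_in_poly_ring)

lemma two_minors_S_in_kernel:
  "two_minors S (sym_entry n lam mu)
     \<subseteq> {f \<in> poly_ring T. monomial_map (subst_monom exp_xx) f = (0 :: 'k::comm_ring_1 mpoly)}"
proof
  fix g :: "'k mpoly" assume "g \<in> two_minors S (sym_entry n lam mu)"
  then obtain i j k l where g: "g = sym_entry n lam mu (i, j) * sym_entry n lam mu (k, l)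
      - sym_entry n lam mu (i, l) * sym_entry n lam mu (k, j)"
    and S: "(i, j) \<in> S" "(i, l) \<in> S" "(k, j) \<in> S" "(k, l) \<in> S"
    unfolding two_minors_def by blast
  obtain q1 q2 q3 q4 where "q1 \<in> T" "q2 \<in> T" "q3 \<in> T" "q4 \<in> T"
    and "g = Var q1 * Var q2 - Var q3 * Var q4"
    and "exp_xx q1 = exp_xx (i, j)" "exp_xx q2 = exp_xx (k, l)"
    and "exp_xx q3 = exp_xx (i, l)" "exp_xx q4 = exp_xx (k, j)"
    using sym_entry_eq_Var_T[OF S(1)] sym_entry_eq_Var_T[OF S(4)]
      sym_entry_eq_Var_T[OF S(2)] sym_entry_eq_Var_T[OF S(3)] g by metis
  then show "g \<in> {f \<in> poly_ring T. monomial_map (subst_monom exp_xx) f = 0}"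
    by (auto simp: monomial_map_subst_monom_binomial exp_xx_def ac_simps
        intro!: poly_ring_diff poly_ring_mult Var_in_poly_ring)
qed

lemma linked_T_if_equal_image:
  assumes "Poly_Mapping.keys m \<subseteq> T" "Poly_Mapping.keys m' \<subseteq> T"
    and "subst_monom exp_xy m = subst_monom exp_xy m'"
  shows "linked T (two_minors T Var :: 'k::comm_ring_1 mpoly set) m m'"
proof (rule linked_if_equal_margins[OF order_refl assms(1,2)])
  show "row_deg m = row_deg m'"
    by (rule ext) (metis assms(3) lookup_subst_exp_xy_row)
  show "col_deg m = col_deg m'"
    by (rule ext) (metis assms(3) lookup_subst_exp_xy_col)
qed

lemma linked_S_if_equal_image:
  fixes G :: "'k::comm_ring_1 mpoly set"
  defines "G \<equiv> two_minors S (sym_entry n lam mu)"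
  assumes "Poly_Mapping.keys m \<subseteq> T" "Poly_Mapping.keys m' \<subseteq> T"
    and "subst_monom exp_xx m = subst_monom exp_xx m'"
  shows "linked T G m m'"
proof -
  have moves: "linked T G (var_exp (a, b) + var_exp (c, d)) (var_exp (a, c) + var_exp (b, d))"
    if "(a, b) \<in> T" "(c, d) \<in> T" "b < c" for a b c d
    unfolding G_def using exchange_in_two_minors_S[OF that] by (rule linked_of_generator)
  obtain m1 where m1: "Poly_Mapping.keys m1 \<subseteq> T" "separated m1" "index_deg m1 = index_deg m"
    "linked T G m m1"
    using ex_linked_separated[OF T_upper T_exchange_closed moves assms(2)] by blast
  obtain m2 where m2: "Poly_Mapping.keys m2 \<subseteq> T" "separated m2" "index_deg m2 = index_deg m'"
    "linked T G m' m2"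
    using ex_linked_separated[OF T_upper T_exchange_closed moves assms(3)] by blast
  have "index_deg m = index_deg m'"
    by (rule ext) (metis assms(4) lookup_subst_exp_xx)
  then have "row_deg m1 = row_deg m2" "col_deg m1 = col_deg m2"
    using separated_margins_eq m1(2,3) m2(2,3) by metis+
  then have "linked T G m1 m2"
    using linked_if_equal_margins[OF _ m1(1) m2(1)] two_minors_T_subset_S unfolding G_def by blast
  then show ?thesis
    using m1(4) m2(4) linked_trans linked_sym by metis
qed

lemma prime_ideal_in_two_minors_T:
  "prime_ideal_in (poly_ring T :: 'k::idom mpoly set) (ideal_gen (poly_ring T) (two_minors T Var))"
proof -
  have "ideal_gen (poly_ring T) (two_minors T Var)
      = {f \<in> poly_ring T. monomial_map (subst_monom exp_xy) f = (0 :: 'k mpoly)}"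
    using two_minors_T_in_kernel linked_T_if_equal_image
    by (intro ideal_gen_eq_kernel_monomial_map[where \<psi> = "subst_monom exp_xy", OF subst_monom_add])
      blast+
  then show ?thesis
    using prime_ideal_in_kernel_monomial_map[where \<psi> = "subst_monom exp_xy", OF subst_monom_add]
    by simp
qed

lemma prime_ideal_in_two_minors_S:
  "prime_ideal_in (poly_ring T :: 'k::idom mpoly set)
     (ideal_gen (poly_ring T) (two_minors S (sym_entry n lam mu)))"
proof -
  have "ideal_gen (poly_ring T) (two_minors S (sym_entry n lam mu))
      = {f \<in> poly_ring T. monomial_map (subst_monom exp_xx) f = (0 :: 'k mpoly)}"
    using two_minors_S_in_kernel linked_S_if_equal_image
    by (intro ideal_gen_eq_kernel_monomial_map[where \<psi> = "subst_monom exp_xx", OF subst_monom_add])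
      blast+
  then show ?thesis
    using prime_ideal_in_kernel_monomial_map[where \<psi> = "subst_monom exp_xx", OF subst_monom_add]
    by simp
qed

end

theorem proposition3p5:
  fixes n :: nat and lam mu :: "nat \<Rightarrow> nat" and m :: nat
  assumes "n \<ge> 1"
    and "m = lam 1"
    and "\<And>i. 1 \<le> i \<Longrightarrow> i \<le> n \<Longrightarrow> lam i > 0"
    and "\<And>i. 1 \<le> i \<Longrightarrow> i < n \<Longrightarrow> lam (i + 1) \<le> lam i"
    and "\<And>i. 1 \<le> i \<Longrightarrow> i < n \<Longrightarrow> mu i \<le> mu (i + 1)"
    and "mu n < lam n"
    and "\<And>i. 1 \<le> i \<Longrightarrow> i \<le> n \<Longrightarrow> mu i \<ge> i - 1"
  shows "prime_ideal_in (poly_ring (tab_pos n lam mu) :: 'k::field mpoly set)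
           (ideal_gen (poly_ring (tab_pos n lam mu))
              (two_minors (tab_pos n lam mu) tab_entry))
       \<and> prime_ideal_in (poly_ring (tab_pos n lam mu) :: 'k::field mpoly set)
           (ideal_gen (poly_ring (tab_pos n lam mu))
              (two_minors (sym_pos n lam mu) (sym_entry n lam mu)))"
proof -
  interpret skew_tableau n lam mu
    using assms(4,5,7) by unfold_locales
  show ?thesis
    unfolding tab_entry_def[abs_def]
    using prime_ideal_in_two_minors_T prime_ideal_in_two_minors_S by blast
qed

end
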